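(* Let $\lambda_1\ge\lambda_2\ge\dots\ge\lambda_r>0$ satisfy $\lambda_i\le\chi\lambda_{i+1}$ for all $i\in[r-1]$, for some $\chi>1$. Let $\eta>0$ and let $\gamma_0,\gamma_1,\dots>0$ be such that $\eta\gamma_j\lambda_1<1$ for all $j$. For $t\ge0$ and $i\in[r]$ define $P_i(t)=\prod_{j=0}^{t-1}(1-\eta\gamma_j\lambda_i)$. Fix $a_1\in(0,1)$ and set $a_2=e^{(a_1-1)/\chi}$. (a) For every $t$ and every $i\in[r-1]$: if $P_i(t)<a_1$, then $P_{i+1}(t)<a_2$. (b) Consequently, if $P_1(t)<a_2$ and $P_r(t)\ge a_1$, then there exists $i\in[r]$ with $a_1\le P_i(t)\le a_2$. In particular, (b) holds for all $t$ in the interval $[t_1,t_2)$, where $t_1$ is the first iteration with $P_1(t)<a_2$ and $t_2$ is the first iteration with $P_r(t)<a_1$.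
   Context: In the paper this is applied with $\gamma_j\lambda_i=\lambda_i(\tilde M(j))=v_i^\top\tilde M(j)v_i$. Here $\tilde M(j)=\gamma_jX^\top X$ with $\gamma_j>0$, and the $\lambda_i$ are the nonzero eigenvalues of $X^\top X$. *)

theory Defs
  imports Complex_Main
begin

definition Pprod :: "real \<Rightarrow> (nat \<Rightarrow> real) \<Rightarrow> (nat \<Rightarrow> real) \<Rightarrow> nat \<Rightarrow> nat \<Rightarrow> real" where
  "Pprod eta gam lam i t = (\<Prod>j<t. 1 - eta * gam j * lam i)"

end

theory Submission
  imports Defs "HOL-Analysis.Infinite_Products"
begin

text \<open>
  Each factor \<open>1 - \<eta>\<gamma>\<^sub>j\<lambda>\<^sub>i\<close> lies in \<open>[0, 1]\<close>, so \<open>P\<^sub>i(t)\<close> is squeezed between the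
  Weierstrass bound \<open>1 - \<Sigma>\<^sub>j \<eta>\<gamma>\<^sub>j\<lambda>\<^sub>i\<close> and \<open>exp (-\<Sigma>\<^sub>j \<eta>\<gamma>\<^sub>j\<lambda>\<^sub>i)\<close>. Since
  \<open>\<lambda>\<^sub>i \<le> \<chi>\<lambda>\<^sub>i\<^sub>+\<^sub>1\<close>, the sums for consecutive indices differ by at most the factor \<open>\<chi>\<close>:
  \<open>P\<^sub>i(t) < a\<^sub>1\<close> forces \<open>\<Sigma>\<^sub>j \<eta>\<gamma>\<^sub>j\<lambda>\<^sub>i\<^sub>+\<^sub>1 > (1 - a\<^sub>1)/\<chi>\<close>, hence \<open>P\<^sub>i\<^sub>+\<^sub>1(t) < a\<^sub>2\<close>.
  Part (b) is then a discrete intermediate value argument along \<open>i = 1, \<dots>, r\<close>,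
  and the last part uses that \<open>P\<^sub>1(t)\<close> is non-increasing in \<open>t\<close>.
\<close>

lemma prod_one_minus_le_exp_neg_sum:
  fixes x :: "'a \<Rightarrow> real"
  assumes "\<And>j. j \<in> A \<Longrightarrow> x j \<le> 1"
  shows "(\<Prod>j\<in>A. 1 - x j) \<le> exp (- sum x A)"
proof -
  have "(\<Prod>j\<in>A. 1 - x j) \<le> (\<Prod>j\<in>A. exp (- x j))"
    using assms exp_ge_add_one_self[of "- x _"] by (intro prod_mono) auto
  also have "\<dots> = exp (- sum x A)"
    by (cases "finite A") (simp_all add: exp_sum[symmetric] sum_negf)
  finally show ?thesis .
qed

lemma prod_one_minus_lt_exp_if_dominated:
  fixes x y :: "'a \<Rightarrow> real"
  assumes x_unit: "\<And>j. j \<in> A \<Longrightarrow> x j \<in> {0..1}"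
    and y_le_1: "\<And>j. j \<in> A \<Longrightarrow> y j \<le> 1"
    and dominated: "\<And>j. j \<in> A \<Longrightarrow> x j \<le> c * y j"
    and c_pos: "c > 0"
    and prod_x_lt: "(\<Prod>j\<in>A. 1 - x j) < a"
  shows "(\<Prod>j\<in>A. 1 - y j) < exp ((a - 1) / c)"
proof -
  have "1 - sum x A < a"
    using Weierstrass_prod_ineq[of A x] x_unit prod_x_lt by fastforce
  moreover have "sum x A \<le> c * sum y A"
    unfolding sum_distrib_left using dominated by (rule sum_mono)
  ultimately have "- sum y A < (a - 1) / c"
    using c_pos by (simp add: field_simps)
  have "(\<Prod>j\<in>A. 1 - y j) \<le> exp (- sum y A)"
    using y_le_1 by (rule prod_one_minus_le_exp_neg_sum)
  also have "\<dots> < exp ((a - 1) / c)"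
    using \<open>- sum y A < (a - 1) / c\<close> by simp
  finally show ?thesis .
qed

lemma antimono_on_nat_interval:
  fixes f :: "nat \<Rightarrow> 'a::order"
  assumes step: "\<And>k. m \<le> k \<Longrightarrow> k < n \<Longrightarrow> f (k + 1) \<le> f k"
    and "m \<le> i" "i \<le> j" "j \<le> n"
  shows "f j \<le> f i"
  using \<open>i \<le> j\<close> \<open>j \<le> n\<close>
proof (induction j rule: dec_induct)
  case (step k)
  then have "f (k + 1) \<le> f k"
    using \<open>m \<le> i\<close> assms(1) by simp
  with step show ?case
    by simp
qed simp

lemma nat_crossing_between:
  fixes f :: "nat \<Rightarrow> real"
  assumes "1 \<le> r" "f 1 \<le> b" "a \<le> f r"
    and cross: "\<And>i. 1 \<le> i \<Longrightarrow> i < r \<Longrightarrow> f i < a \<Longrightarrow> f (i + 1) \<le> b"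
  shows "\<exists>i. 1 \<le> i \<and> i \<le> r \<and> a \<le> f i \<and> f i \<le> b"
  using assms
proof (induction r rule: nat_induct_at_least)
  case base
  then show ?case by auto
next
  case (Suc r)
  show ?case
  proof (cases "a \<le> f r")
    case True
    with Suc show ?thesis
      by (metis less_Suc_eq le_SucI)
  next
    case False
    then have "f (Suc r) \<le> b"
      using Suc.prems(3)[of r] Suc.hyps by simp
    with Suc.prems(2) Suc.hyps show ?thesis
      by auto
  qed
qed

lemma Pprod_antimono_time:
  assumes unit: "\<And>j. 0 \<le> eta * gam j * lam i \<and> eta * gam j * lam i \<le> 1"
    and "s \<le> t"
  shows "Pprod eta gam lam i t \<le> Pprod eta gam lam i s"
  using \<open>s \<le> t\<close>
proof (induction t rule: dec_induct)
  case (step n)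
  have "0 \<le> Pprod eta gam lam i n"
    unfolding Pprod_def using unit by (intro prod_nonneg) simp
  then have "Pprod eta gam lam i n * (1 - eta * gam n * lam i) \<le> Pprod eta gam lam i n"
    using unit[of n] by (intro mult_left_le) simp_all
  with step show ?case
    by (simp add: Pprod_def)
qed simp

theorem mainTheorem4:
  fixes lam gam :: "nat \<Rightarrow> real" and r :: nat and chi eta a1 a2 :: real
  assumes r_pos: "r \<ge> 1"
    and lam_mono: "\<And>i. 1 \<le> i \<Longrightarrow> i < r \<Longrightarrow> lam i \<ge> lam (i + 1)"
    and lam_pos: "lam r > 0"
    and chi_gt: "chi > 1"
    and lam_ratio: "\<And>i. 1 \<le> i \<Longrightarrow> i < r \<Longrightarrow> lam i \<le> chi * lam (i + 1)"
    and eta_pos: "eta > 0"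
    and gamma_pos: "\<And>j. gam j > 0"
    and step: "\<And>j. eta * gam j * lam 1 < 1"
    and a1: "0 < a1" "a1 < 1"
    and a2_def: "a2 = exp ((a1 - 1) / chi)"
  shows
    "(\<forall>t. \<forall>i. 1 \<le> i \<and> i < r \<longrightarrow>
        Pprod eta gam lam i t < a1 \<longrightarrow> Pprod eta gam lam (i + 1) t < a2)
     \<and> (\<forall>t. Pprod eta gam lam 1 t < a2 \<and> Pprod eta gam lam r t \<ge> a1 \<longrightarrow>
        (\<exists>i. 1 \<le> i \<and> i \<le> r \<and> a1 \<le> Pprod eta gam lam i t \<and> Pprod eta gam lam i t \<le> a2))
     \<and> (\<forall>t1 t2 t.
        Pprod eta gam lam 1 t1 < a2 \<and> (\<forall>s<t1. \<not> Pprod eta gam lam 1 s < a2) \<and>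
        Pprod eta gam lam r t2 < a1 \<and> (\<forall>s<t2. \<not> Pprod eta gam lam r s < a1) \<and>
        t1 \<le> t \<and> t < t2 \<longrightarrow>
        Pprod eta gam lam 1 t < a2 \<and> Pprod eta gam lam r t \<ge> a1 \<and>
        (\<exists>i. 1 \<le> i \<and> i \<le> r \<and> a1 \<le> Pprod eta gam lam i t \<and> Pprod eta gam lam i t \<le> a2))"
proof -
  let ?P = "Pprod eta gam lam"
  have factor_unit: "0 \<le> eta * gam j * lam i \<and> eta * gam j * lam i \<le> 1"
    if "1 \<le> i" "i \<le> r" for i j
  proof -
    have "lam r \<le> lam i" "lam i \<le> lam 1"
      using antimono_on_nat_interval[of 1 r lam] lam_mono that by auto
    then show ?thesis
      using lam_pos eta_pos gamma_pos[of j] step[of j]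
      by (smt (verit) mult_left_mono mult_pos_pos)
  qed
  have part_a: "?P (i + 1) t < a2" if "1 \<le> i" "i < r" "?P i t < a1" for i t
    unfolding a2_def Pprod_def
  proof (rule prod_one_minus_lt_exp_if_dominated)
    show "eta * gam j * lam i \<le> chi * (eta * gam j * lam (i + 1))" for j
      using lam_ratio[OF that(1,2)] eta_pos gamma_pos[of j]
      by (simp add: mult_left_mono mult.left_commute)
  qed (use that factor_unit chi_gt in \<open>auto simp: Pprod_def\<close>)
  have part_b: "\<exists>i. 1 \<le> i \<and> i \<le> r \<and> a1 \<le> ?P i t \<and> ?P i t \<le> a2"
    if "?P 1 t < a2" "a1 \<le> ?P r t" for t
    using nat_crossing_between[of r "\<lambda>i. ?P i t" a2 a1] part_a r_pos that by fastforce
  show ?thesis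
  proof (intro conjI allI impI)
    fix t1 t2 t
    assume window: "?P 1 t1 < a2 \<and> (\<forall>s<t1. \<not> ?P 1 s < a2) \<and>
        ?P r t2 < a1 \<and> (\<forall>s<t2. \<not> ?P r s < a1) \<and> t1 \<le> t \<and> t < t2"
    show P1_lt: "?P 1 t < a2"
      using window Pprod_antimono_time[of eta gam lam 1 t1 t] factor_unit r_pos by fastforce
    show Pr_ge: "a1 \<le> ?P r t"
      using window by (meson not_less)
    show "\<exists>i. 1 \<le> i \<and> i \<le> r \<and> a1 \<le> ?P i t \<and> ?P i t \<le> a2"
      using part_b P1_lt Pr_ge by blast
  qed (use part_a part_b in auto)
qed

end
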